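(* Let $0<a<b$ be real numbers and let $f:(a,b)\to\mathbb{R}$ be real analytic and not identically zero. Assume that: (1) both as $x\to a$ and as $x\to b$ we have $\kappa(f,x)\to\infty$; (2) both as $x\to a$ and as $x\to b$ we have $\limsup |H(f,x)|\leq C$ for some constant $C>0$, where \[H(f,x)=\frac{x^2f(x)f''(x)}{f(x)^2+x^2f'(x)^2}.\] Moreover, the part of hypothesis (2) concerning $x\to a$ (resp. $x\to b$) is automatically satisfied if $f$ admits an analytic extension to $(a-\epsilon,b)$ (resp. $(a,b+\epsilon)$) for some $\epsilon>0$. Then $f$ is amenable.
   Context: Relative distance on $\mathbb{R}$: $\mathrm{dist}(x,y)=0$ if $x=y=0$, $\mathrm{dist}(x,y)=|\log(y/x)|$ if $xy>0$, and $\mathrm{dist}(x,y)=\infty$ otherwise. For a real analytic function $f$ on an open set $\Omega\subseteq\mathbb{R}$ (a union of open intervals), not identically zero, the condition number is $\kappa(f,x)=0$ if $x=0$, $\kappa(f,x)=\infty$ if $x\neq0$ and $f(x)=0$, and $\kappa(f,x)=|x|\,|f'(x)|/|f(x)|$ otherwise; set $\mu(f,x)=1+\kappa(f,x)$. The function $f:\Omega\to\mathbb{R}$ is called amenable if there is a constant $C>0$ such that for every $x\in\Omega$ with $\kappa(f,x)<\infty$, the set $B_x=\{y\in\mathbb{R}:\mathrm{dist}(y,x)<1/(C\mu(f,x))\}$ is contained in $\Omega$, and $\mu(f,y)\leq C\mu(f,x)$ for all $y\in B_x$. *)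

theory Defs
  imports "HOL-Analysis.Analysis" "HOL-Library.Extended_Real" "HOL-Library.Liminf_Limsup"
begin

definition real_analytic_on :: "(real \<Rightarrow> real) \<Rightarrow> real set \<Rightarrow> bool" where
  "real_analytic_on f S \<longleftrightarrow>
     (\<forall>x\<in>S. \<exists>r>0. \<exists>c :: nat \<Rightarrow> real.
        \<forall>y. \<bar>y - x\<bar> < r \<longrightarrow> (\<lambda>n. c n * (y - x) ^ n) sums f y)"

definition rdist :: "real \<Rightarrow> real \<Rightarrow> ereal" where
  "rdist x y = (if x = 0 \<and> y = 0 then 0
                else if x * y > 0 then ereal \<bar>ln (y / x)\<bar>
                else \<infinity>)"

definition kappa :: "(real \<Rightarrow> real) \<Rightarrow> real \<Rightarrow> ereal" where
  "kappa f x = (if x = 0 then 0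
                else if f x = 0 then \<infinity>
                else ereal (\<bar>x\<bar> * \<bar>deriv f x\<bar> / \<bar>f x\<bar>))"

definition mu :: "(real \<Rightarrow> real) \<Rightarrow> real \<Rightarrow> ereal" where
  "mu f x = 1 + kappa f x"

definition amenable :: "(real \<Rightarrow> real) \<Rightarrow> real set \<Rightarrow> bool" where
  "amenable f \<Omega> \<longleftrightarrow>
     (\<exists>C>0. \<forall>x\<in>\<Omega>. kappa f x < \<infinity> \<longrightarrow>
        (let B = {y. rdist y x < ereal (1 / (C * real_of_ereal (mu f x)))} in
           B \<subseteq> \<Omega> \<and> (\<forall>y\<in>B. mu f y \<le> ereal C * mu f x)))"

definition Hq :: "(real \<Rightarrow> real) \<Rightarrow> real \<Rightarrow> real" where
  "Hq f x = x\<^sup>2 * f x * deriv (deriv f) x / ((f x)\<^sup>2 + x\<^sup>2 * (deriv f x)\<^sup>2)"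

end

theory Submission
  imports Defs
begin

text \<open>
  With the elasticity \<open>e = x f'(x) / f(x)\<close> we have \<open>\<kappa> = \<bar>e\<bar>\<close>. In the variable \<open>t = ln x\<close> the
  angle \<open>\<theta> = arctan e\<close> satisfies \<open>d\<theta>/dt = H(f,x) + (e - e\<^sup>2) / (1 + e\<^sup>2)\<close>, so \<open>\<bar>H\<bar> \<le> L\<close> makes \<open>\<theta>\<close>
  Lipschitz with constant \<open>L + 3/2\<close> as long as \<open>f\<close> has no zero. As \<open>cos \<theta> = 1 / sqrt (1 + e\<^sup>2) \<ge> 1 / \<mu>\<close>,
  on the logarithmic ball of radius \<open>1 / ((2 L + 4) \<mu>(x))\<close> around \<open>x\<close> the cosine stays above
  \<open>1 / (2 \<mu>(x))\<close>, so \<open>\<mu> \<le> 4 \<mu>(x)\<close> there. This bound on \<open>f' / f\<close> excludes zeros of \<open>f\<close> by a Gronwall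
  argument, and \<open>\<kappa> \<rightarrow> \<infinity>\<close> at the endpoints keeps the ball inside \<open>(a, b)\<close>.

  \<open>H\<close> is bounded near the endpoints by hypothesis, and near every other point \<open>c \<noteq> 0\<close> of analyticity
  because, by the identity theorem, \<open>f = (x - c)^k g\<close> with \<open>g(c) \<noteq> 0\<close>, and after cancelling
  \<open>(x - c)^(2k - 2)\<close> the quotient \<open>H\<close> has a nonvanishing denominator at \<open>c\<close>; compactness does the
  rest. The same local bound at an endpoint of an analytic extension gives the last two statements.
\<close>

section \<open>Real analytic functions as local power series\<close>

definition fps_expansion_on_ball :: "(real \<Rightarrow> real) \<Rightarrow> real \<Rightarrow> real \<Rightarrow> real fps \<Rightarrow> bool" where
  "fps_expansion_on_ball f x r F \<longleftrightarrow>
     ereal r \<le> fps_conv_radius F \<and> (\<forall>y\<in>ball x r. f y = eval_fps F (y - x))"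

lemma real_analytic_on_fps_expansion:
  assumes "real_analytic_on f S" "x \<in> S"
  obtains r F where "r > 0" "fps_expansion_on_ball f x r F"
proof -
  obtain r c where "r > 0" and c: "\<And>y. \<bar>y - x\<bar> < r \<Longrightarrow> (\<lambda>n. c n * (y - x) ^ n) sums f y"
    using assms unfolding real_analytic_on_def by blast
  have "ereal r \<le> fps_conv_radius (Abs_fps c)"
    unfolding fps_conv_radius_def
  proof (rule conv_radius_geI_ex')
    fix s :: real assume "0 < s" "ereal s < ereal r"
    then show "summable (\<lambda>n. fps_nth (Abs_fps c) n * of_real s ^ n)"
      using c[of "x + s"] by (auto simp: sums_iff)
  qed
  moreover have "f y = eval_fps (Abs_fps c) (y - x)" if "y \<in> ball x r" for y
    using c[of y] that by (simp add: eval_fps_def dist_real_def sums_iff)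
  ultimately show ?thesis
    using \<open>r > 0\<close> by (intro that[of r "Abs_fps c"]) (auto simp: fps_expansion_on_ball_def)
qed

lemma fps_expansion_on_ball_radius:
  assumes "fps_expansion_on_ball f x r F" "y \<in> ball x r"
  shows "ereal (norm (y - x)) < fps_conv_radius F"
proof -
  have "ereal (norm (y - x)) < ereal r"
    using assms(2) by (simp add: dist_real_def abs_minus_commute)
  also have "\<dots> \<le> fps_conv_radius F"
    using assms(1) by (simp add: fps_expansion_on_ball_def)
  finally show ?thesis .
qed

lemma fps_expansion_on_ball_has_derivative:
  assumes "fps_expansion_on_ball f x r F" "y \<in> ball x r"
  shows "(f has_real_derivative eval_fps (fps_deriv F) (y - x)) (at y)"
proof -
  have "(eval_fps F has_real_derivative eval_fps (fps_deriv F) (y - x)) (at (y - x))"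
    using fps_expansion_on_ball_radius[OF assms] by (rule has_field_derivative_eval_fps)
  from DERIV_chain2[OF this DERIV_diff[OF DERIV_ident DERIV_const]]
  have "((\<lambda>y. eval_fps F (y - x)) has_real_derivative eval_fps (fps_deriv F) (y - x)) (at y)"
    by simp
  then show ?thesis
    by (rule has_field_derivative_transform_within_open[where S = "ball x r"])
      (use assms in \<open>auto simp: fps_expansion_on_ball_def\<close>)
qed

lemma fps_expansion_on_ball_deriv:
  assumes "fps_expansion_on_ball f x r F"
  shows "fps_expansion_on_ball (deriv f) x r (fps_deriv F)"
  using assms fps_conv_radius_deriv[of F] DERIV_imp_deriv[OF fps_expansion_on_ball_has_derivative[OF assms]]
  by (auto simp: fps_expansion_on_ball_def intro: order.trans)

lemma real_analytic_on_twice_differentiable: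
  assumes "real_analytic_on f S" "x \<in> S"
  shows "(f has_real_derivative deriv f x) (at x)"
    and "(deriv f has_real_derivative deriv (deriv f) x) (at x)"
proof -
  obtain r F where "r > 0" and F: "fps_expansion_on_ball f x r F"
    using real_analytic_on_fps_expansion[OF assms] .
  then have x: "x \<in> ball x r" by simp
  note D1 = fps_expansion_on_ball_has_derivative[OF F x]
  note D2 = fps_expansion_on_ball_has_derivative[OF fps_expansion_on_ball_deriv[OF F] x]
  show "(f has_real_derivative deriv f x) (at x)"
    using D1 DERIV_imp_deriv[OF D1] by simp
  show "(deriv f has_real_derivative deriv (deriv f) x) (at x)"
    using D2 DERIV_imp_deriv[OF D2] by simp
qed

lemma eval_fps_eq_power_mult_shift:
  fixes F :: "real fps"
  assumes "ereal (norm z) < fps_conv_radius F" "\<And>i. i < k \<Longrightarrow> fps_nth F i = 0"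
  shows "eval_fps F z = z ^ k * eval_fps (fps_shift k F) z"
proof -
  have "F = fps_shift k F * fps_X ^ k"
    using assms(2) by (intro fps_ext) (simp add: fps_X_power_mult_right_nth)
  then have "eval_fps F z = eval_fps (fps_shift k F * fps_X ^ k) z" by simp
  also have "\<dots> = z ^ k * eval_fps (fps_shift k F) z"
    using assms(1) by (subst eval_fps_mult) simp_all
  finally show ?thesis .
qed

lemma isCont_eval_fps_diff:
  fixes F :: "real fps"
  assumes "0 < fps_conv_radius F"
  shows "isCont (\<lambda>y. eval_fps F (y - x)) x"
proof -
  have "isCont (eval_fps F) (x - x)"
    using assms by (intro continuous_eval_fps) (simp add: zero_ereal_def)
  then show ?thesis
    by (rule isCont_o2[rotated]) simp
qed

lemma fps_expansion_on_ball_conv_radius_pos: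
  assumes "fps_expansion_on_ball f x r F" "r > 0"
  shows "0 < fps_conv_radius F"
  using fps_expansion_on_ball_radius[OF assms(1), of x] assms(2) by (simp add: zero_ereal_def)

lemma fps_expansion_on_ball_nonzero:
  assumes "fps_expansion_on_ball f x r F" "r > 0" "\<not> eventually (\<lambda>y. f y = 0) (nhds x)"
  shows "F \<noteq> 0"
proof
  assume "F = 0"
  then have "\<forall>y\<in>ball x r. f y = 0"
    using assms(1) by (simp add: fps_expansion_on_ball_def)
  with assms(2,3) show False
    unfolding eventually_nhds by (meson centre_in_ball open_ball)
qed

lemma fps_expansion_on_ball_isolated_zero:
  assumes "fps_expansion_on_ball f x r F" "r > 0" "F \<noteq> 0"
  shows "eventually (\<lambda>y. f y \<noteq> 0) (at x)"
proof -
  define k where "k = subdegree F"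
  define A where "A = fps_shift k F"
  note rad = fps_expansion_on_ball_radius[OF assms(1)]
  have "isCont (\<lambda>y. eval_fps A (y - x)) x"
    using fps_expansion_on_ball_conv_radius_pos[OF assms(1,2)] unfolding A_def
    by (intro isCont_eval_fps_diff) simp
  moreover have "eval_fps A (x - x) \<noteq> 0"
    using assms(3) by (simp add: A_def k_def eval_fps_at_0)
  ultimately have "eventually (\<lambda>y. eval_fps A (y - x) \<noteq> 0) (at x)"
    unfolding isCont_def by (rule tendsto_imp_eventually_ne)
  moreover have "eventually (\<lambda>y. y \<in> ball x r) (at x)"
    using assms(2) by (intro eventually_at_in_open') auto
  moreover have "eventually (\<lambda>y. y \<noteq> x) (at x)"
    by (rule eventually_neq_at_within)
  ultimately show ?thesis
  proof eventually_elim
    case (elim y)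
    then have "f y = eval_fps F (y - x)"
      using assms(1) by (simp add: fps_expansion_on_ball_def)
    also have "\<dots> = (y - x) ^ k * eval_fps A (y - x)"
      unfolding A_def k_def
      by (rule eval_fps_eq_power_mult_shift[OF rad]) (use elim in auto)
    finally have "f y = (y - x) ^ k * eval_fps A (y - x)" .
    with elim show ?case by simp
  qed
qed

lemma open_Collect_eventually_nhds:
  assumes "open S"
  shows "open {z \<in> S. eventually P (nhds z)}"
proof (rule open_subopen[THEN iffD2], intro ballI)
  fix z assume "z \<in> {z \<in> S. eventually P (nhds z)}"
  then obtain T where T: "open T" "z \<in> T" "\<forall>y\<in>T. P y" "z \<in> S"
    unfolding eventually_nhds by blast
  have "T \<inter> S \<subseteq> {z \<in> S. eventually P (nhds z)}"
  proof
    fix y assume "y \<in> T \<inter> S"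
    with T have "eventually P (nhds y)"
      unfolding eventually_nhds by blast
    with \<open>y \<in> T \<inter> S\<close> show "y \<in> {z \<in> S. eventually P (nhds z)}" by simp
  qed
  moreover have "open (T \<inter> S)" "z \<in> T \<inter> S"
    using T assms by auto
  ultimately show "\<exists>T'. open T' \<and> z \<in> T' \<and> T' \<subseteq> {z \<in> S. eventually P (nhds z)}"
    by blast
qed

lemma real_analytic_on_not_eventually_zero:
  assumes an: "real_analytic_on f S" and S: "open S" "connected S"
    and nz: "\<exists>x0\<in>S. f x0 \<noteq> 0" and x: "x \<in> S"
  shows "\<not> eventually (\<lambda>y. f y = 0) (nhds x)"
proof -
  define Z where "Z = {z \<in> S. eventually (\<lambda>y. f y = 0) (nhds z)}"
  have Z_zero: "f z = 0" if "z \<in> Z" for z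
    using that eventually_nhds_x_imp_x[of "\<lambda>y. f y = 0" z] unfolding Z_def by blast
  have "open Z"
    unfolding Z_def using S(1) by (rule open_Collect_eventually_nhds)
  have "open (S - Z)"
  proof (rule open_subopen[THEN iffD2], intro ballI)
    fix z assume z: "z \<in> S - Z"
    obtain r F where "r > 0" and F: "fps_expansion_on_ball f z r F"
      using real_analytic_on_fps_expansion[OF an] z by blast
    have "F \<noteq> 0"
      using z by (intro fps_expansion_on_ball_nonzero[OF F \<open>r > 0\<close>]) (simp add: Z_def)
    have "eventually (\<lambda>y. f y \<noteq> 0) (at z)"
      by (rule fps_expansion_on_ball_isolated_zero[OF F \<open>r > 0\<close> \<open>F \<noteq> 0\<close>])
    moreover have "eventually (\<lambda>y. y \<in> S) (at z)"
      using S(1) z by (intro eventually_at_in_open') auto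
    ultimately have "eventually (\<lambda>y. y \<in> S - Z) (at z)"
      by eventually_elim (use Z_zero in blast)
    with z have "eventually (\<lambda>y. y \<in> S - Z) (nhds z)"
      unfolding eventually_nhds_conv_at by blast
    then show "\<exists>T. open T \<and> z \<in> T \<and> T \<subseteq> S - Z"
      unfolding eventually_nhds by blast
  qed
  have "Z \<inter> S = {} \<or> (S - Z) \<inter> S = {}"
    by (rule connectedD[OF S(2) \<open>open Z\<close> \<open>open (S - Z)\<close>]) auto
  moreover have "(S - Z) \<inter> S \<noteq> {}"
    using nz Z_zero by blast
  ultimately have "x \<notin> Z"
    using x by blast
  with x show ?thesis
    by (simp add: Z_def)
qed

section \<open>Boundedness of \<open>Hq\<close>\<close>

lemma bounded_near_if_eventually_eq_isCont:
  fixes g Q :: "real \<Rightarrow> real"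
  assumes "eventually (\<lambda>y. g y = Q y) (at x)" "isCont Q x"
  shows "\<exists>M. eventually (\<lambda>y. \<bar>g y\<bar> \<le> M) (nhds x)"
proof -
  have "((\<lambda>y. \<bar>Q y\<bar>) \<longlongrightarrow> \<bar>Q x\<bar>) (at x)"
    using assms(2) unfolding isCont_def by (rule tendsto_rabs)
  then have "eventually (\<lambda>y. \<bar>Q y\<bar> < \<bar>Q x\<bar> + 1) (at x)"
    by (rule order_tendstoD) simp
  with assms(1) have "eventually (\<lambda>y. \<bar>g y\<bar> \<le> max (\<bar>Q x\<bar> + 1) \<bar>g x\<bar>) (at x)"
    by eventually_elim simp
  then show ?thesis
    by (intro exI[of _ "max (\<bar>Q x\<bar> + 1) \<bar>g x\<bar>"]) (simp add: eventually_nhds_conv_at)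
qed

lemma Hq_fps_expansion_on_ball:
  assumes "fps_expansion_on_ball f x r F" "y \<in> ball x r"
  shows "Hq f y = y\<^sup>2 * eval_fps F (y - x) * eval_fps (fps_deriv (fps_deriv F)) (y - x)
                  / ((eval_fps F (y - x))\<^sup>2 + y\<^sup>2 * (eval_fps (fps_deriv F) (y - x))\<^sup>2)"
proof -
  note F1 = fps_expansion_on_ball_deriv[OF assms(1)]
  note F2 = fps_expansion_on_ball_deriv[OF F1]
  show ?thesis
    using assms(1) F1 F2 assms(2) by (simp add: Hq_def fps_expansion_on_ball_def)
qed

lemma fps_nth_X_mult_deriv_eq_0:
  fixes F :: "real fps"
  assumes "i < subdegree F"
  shows "fps_nth (fps_X * fps_deriv F) i = 0"
    and "fps_nth (fps_X\<^sup>2 * fps_deriv (fps_deriv F)) i = 0"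
proof -
  have F0: "fps_nth F i = 0"
    using assms by (rule nth_less_subdegree_zero)
  then show "fps_nth (fps_X * fps_deriv F) i = 0"
    by (cases i) auto
  show "fps_nth (fps_X\<^sup>2 * fps_deriv (fps_deriv F)) i = 0"
  proof (cases "i < 2")
    case False
    then obtain j where "i = j + 2"
      by (metis add.commute le_add_diff_inverse not_less)
    with F0 show ?thesis
      by (simp add: fps_X_power_mult_nth)
  qed (simp add: fps_X_power_mult_nth)
qed

lemma eval_fps_deriv_factor_power:
  fixes F :: "real fps"
  assumes rad: "ereal (norm h) < fps_conv_radius F"
  defines "k \<equiv> subdegree F"
  shows "eval_fps F h = h ^ k * eval_fps (fps_shift k F) h"
    and "h * eval_fps (fps_deriv F) h = h ^ k * eval_fps (fps_shift k (fps_X * fps_deriv F)) h"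
    and "h\<^sup>2 * eval_fps (fps_deriv (fps_deriv F)) h
           = h ^ k * eval_fps (fps_shift k (fps_X\<^sup>2 * fps_deriv (fps_deriv F))) h"
proof -
  have rad1: "ereal (norm h) < fps_conv_radius (fps_deriv F)"
    using rad fps_conv_radius_deriv[of F] by (rule order.strict_trans2)
  have rad2: "ereal (norm h) < fps_conv_radius (fps_deriv (fps_deriv F))"
    using rad1 fps_conv_radius_deriv[of "fps_deriv F"] by (rule order.strict_trans2)
  show "eval_fps F h = h ^ k * eval_fps (fps_shift k F) h"
    using rad unfolding k_def by (rule eval_fps_eq_power_mult_shift) (rule nth_less_subdegree_zero)
  have "eval_fps (fps_X * fps_deriv F) h = h ^ k * eval_fps (fps_shift k (fps_X * fps_deriv F)) h"
    using rad1 fps_conv_radius_mult[of fps_X "fps_deriv F"] fps_nth_X_mult_deriv_eq_0(1)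
    unfolding k_def by (intro eval_fps_eq_power_mult_shift) (auto intro: order.strict_trans2)
  then show "h * eval_fps (fps_deriv F) h = h ^ k * eval_fps (fps_shift k (fps_X * fps_deriv F)) h"
    using rad1 by (simp add: eval_fps_mult)
  have "eval_fps (fps_X\<^sup>2 * fps_deriv (fps_deriv F)) h
          = h ^ k * eval_fps (fps_shift k (fps_X\<^sup>2 * fps_deriv (fps_deriv F))) h"
    using rad2 fps_conv_radius_mult[of "fps_X\<^sup>2" "fps_deriv (fps_deriv F)"] fps_nth_X_mult_deriv_eq_0(2)
    unfolding k_def by (intro eval_fps_eq_power_mult_shift) (auto intro: order.strict_trans2)
  then show "h\<^sup>2 * eval_fps (fps_deriv (fps_deriv F)) h
               = h ^ k * eval_fps (fps_shift k (fps_X\<^sup>2 * fps_deriv (fps_deriv F))) h"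
    using rad2 by (simp add: eval_fps_mult)
qed

lemma Hq_quotient_cancel_power:
  fixes h y u v w a b c :: real
  assumes "h \<noteq> 0" "u = h ^ k * a" "h * v = h ^ k * b" "h\<^sup>2 * w = h ^ k * c"
  shows "y\<^sup>2 * u * w / (u\<^sup>2 + y\<^sup>2 * v\<^sup>2) = y\<^sup>2 * a * c / (h\<^sup>2 * a\<^sup>2 + y\<^sup>2 * b\<^sup>2)"
proof -
  have num: "h\<^sup>2 * (y\<^sup>2 * u * w) = (h ^ k)\<^sup>2 * (y\<^sup>2 * a * c)"
  proof -
    have "h\<^sup>2 * (y\<^sup>2 * u * w) = y\<^sup>2 * u * (h\<^sup>2 * w)" by (simp add: algebra_simps)
    then show ?thesis using assms(2,4) by (simp add: power2_eq_square algebra_simps)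
  qed
  have den: "h\<^sup>2 * (u\<^sup>2 + y\<^sup>2 * v\<^sup>2) = (h ^ k)\<^sup>2 * (h\<^sup>2 * a\<^sup>2 + y\<^sup>2 * b\<^sup>2)"
  proof -
    have "h\<^sup>2 * (u\<^sup>2 + y\<^sup>2 * v\<^sup>2) = h\<^sup>2 * u\<^sup>2 + y\<^sup>2 * (h * v)\<^sup>2" by (simp add: algebra_simps power2_eq_square)
    then show ?thesis using assms(2,3) by (simp add: power2_eq_square algebra_simps)
  qed
  have "y\<^sup>2 * u * w / (u\<^sup>2 + y\<^sup>2 * v\<^sup>2) = (h\<^sup>2 * (y\<^sup>2 * u * w)) / (h\<^sup>2 * (u\<^sup>2 + y\<^sup>2 * v\<^sup>2))"
    using assms(1) by simp
  also have "\<dots> = y\<^sup>2 * a * c / (h\<^sup>2 * a\<^sup>2 + y\<^sup>2 * b\<^sup>2)"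
    unfolding num den using assms(1) by simp
  finally show ?thesis .
qed

lemma Hq_eq_continuous_near_nonzero:
  assumes F: "fps_expansion_on_ball f x r F" "r > 0" and nz: "fps_nth F 0 \<noteq> 0"
  shows "\<exists>Q. isCont Q x \<and> eventually (\<lambda>y. Hq f y = Q y) (at x)"
proof -
  define Q where "Q y = y\<^sup>2 * eval_fps F (y - x) * eval_fps (fps_deriv (fps_deriv F)) (y - x)
      / ((eval_fps F (y - x))\<^sup>2 + y\<^sup>2 * (eval_fps (fps_deriv F) (y - x))\<^sup>2)" for y
  have "isCont Q x"
    unfolding Q_def using nz fps_expansion_on_ball_conv_radius_pos[OF F]
      fps_conv_radius_deriv[of F] fps_conv_radius_deriv[of "fps_deriv F"]
    by (intro continuous_intros isCont_eval_fps_diff)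
      (auto simp: eval_fps_at_0 add_nonneg_eq_0_iff intro: order.strict_trans2)
  moreover have "eventually (\<lambda>y. y \<in> ball x r) (at x)"
    using F(2) by (intro eventually_at_in_open') auto
  then have "eventually (\<lambda>y. Hq f y = Q y) (at x)"
    by eventually_elim (simp add: Q_def Hq_fps_expansion_on_ball[OF F(1)])
  ultimately show ?thesis by blast
qed

lemma Hq_eq_continuous_near_zero:
  assumes F: "fps_expansion_on_ball f x r F" "r > 0" "F \<noteq> 0" "fps_nth F 0 = 0" and "x \<noteq> 0"
  shows "\<exists>Q. isCont Q x \<and> eventually (\<lambda>y. Hq f y = Q y) (at x)"
proof -
  define k where "k = subdegree F"
  define A B C where "A = fps_shift k F" and "B = fps_shift k (fps_X * fps_deriv F)"
    and "C = fps_shift k (fps_X\<^sup>2 * fps_deriv (fps_deriv F))"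
  define Q where "Q y = y\<^sup>2 * eval_fps A (y - x) * eval_fps C (y - x)
      / ((y - x)\<^sup>2 * (eval_fps A (y - x))\<^sup>2 + y\<^sup>2 * (eval_fps B (y - x))\<^sup>2)" for y
  have "k \<noteq> 0"
    using F(3,4) by (simp add: k_def subdegree_eq_0_iff)
  have "0 < fps_conv_radius A" "0 < fps_conv_radius B" "0 < fps_conv_radius C"
    using fps_expansion_on_ball_conv_radius_pos[OF F(1,2)]
      fps_conv_radius_deriv[of F] fps_conv_radius_deriv[of "fps_deriv F"]
      fps_conv_radius_mult[of fps_X "fps_deriv F"]
      fps_conv_radius_mult[of "fps_X\<^sup>2" "fps_deriv (fps_deriv F)"]
    by (auto simp: A_def B_def C_def intro: order.strict_trans2)
  moreover have "fps_nth B 0 \<noteq> 0"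
    using F(3) \<open>k \<noteq> 0\<close> by (simp add: B_def k_def)
  ultimately have "isCont Q x"
    unfolding Q_def using \<open>x \<noteq> 0\<close>
    by (intro continuous_intros isCont_eval_fps_diff) (simp_all add: eval_fps_at_0)
  moreover have "eventually (\<lambda>y. y \<in> ball x r) (at x)"
    using F(2) by (intro eventually_at_in_open') auto
  with eventually_neq_at_within[of x x UNIV] have "eventually (\<lambda>y. Hq f y = Q y) (at x)"
  proof eventually_elim
    case (elim y)
    note factor = eval_fps_deriv_factor_power[OF fps_expansion_on_ball_radius[OF F(1) elim(2)]]
    have "y - x \<noteq> 0"
      using elim by simp
    from Hq_quotient_cancel_power[OF this factor] show ?case
      unfolding Hq_fps_expansion_on_ball[OF F(1) elim(2)] Q_def by (simp add: A_def B_def C_def k_def)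
  qed
  ultimately show ?thesis by blast
qed

lemma Hq_locally_bounded:
  assumes an: "real_analytic_on f S" and x: "x \<in> S" "x \<noteq> 0"
    and nz: "\<not> eventually (\<lambda>y. f y = 0) (nhds x)"
  shows "\<exists>M. eventually (\<lambda>y. \<bar>Hq f y\<bar> \<le> M) (nhds x)"
proof -
  obtain r F where "r > 0" and F: "fps_expansion_on_ball f x r F"
    using real_analytic_on_fps_expansion[OF an x(1)] .
  have "F \<noteq> 0"
    by (rule fps_expansion_on_ball_nonzero[OF F \<open>r > 0\<close> nz])
  then have "\<exists>Q. isCont Q x \<and> eventually (\<lambda>y. Hq f y = Q y) (at x)"
    using Hq_eq_continuous_near_nonzero[OF F \<open>r > 0\<close>] Hq_eq_continuous_near_zero[OF F \<open>r > 0\<close>] x(2)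
    by blast
  then show ?thesis
    using bounded_near_if_eventually_eq_isCont by blast
qed

lemma Hq_cong_open:
  assumes "open U" "\<And>y. y \<in> U \<Longrightarrow> f y = g y" "y \<in> U"
  shows "Hq f y = Hq g y"
proof -
  have d1: "deriv f z = deriv g z" if "z \<in> U" for z
  proof (rule deriv_cong_ev[OF _ refl])
    show "eventually (\<lambda>z. f z = g z) (nhds z)"
      using eventually_nhds_in_open[OF assms(1) that] by eventually_elim (rule assms(2))
  qed
  have "eventually (\<lambda>z. deriv f z = deriv g z) (nhds y)"
    using eventually_nhds_in_open[OF assms(1,3)] by eventually_elim (rule d1)
  then have "deriv (deriv f) y = deriv (deriv g) y"
    by (rule deriv_cong_ev) simp
  with d1[OF assms(3)] assms(2,3) show ?thesis
    by (simp add: Hq_def)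
qed

lemma eventually_bounded_if_Limsup_le:
  fixes g :: "'a \<Rightarrow> real"
  assumes "Limsup F (\<lambda>y. ereal \<bar>g y\<bar>) \<le> ereal C"
  shows "\<exists>M. eventually (\<lambda>y. \<bar>g y\<bar> \<le> M) F"
proof -
  have "Limsup F (\<lambda>y. ereal \<bar>g y\<bar>) < ereal (C + 1)"
    using assms by (rule order.strict_trans1) simp
  then have "eventually (\<lambda>y. ereal \<bar>g y\<bar> < ereal (C + 1)) F"
    by (rule Limsup_lessD)
  then have "eventually (\<lambda>y. \<bar>g y\<bar> \<le> C + 1) F"
    by eventually_elim simp
  then show ?thesis ..
qed

lemma Limsup_Hq_bounded_if_analytic_extension:
  assumes an: "real_analytic_on g S" "open S" "connected S" "\<exists>x\<in>S. g x \<noteq> 0"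
    and c: "c \<in> S" "c \<noteq> 0"
    and U: "open U" "\<And>y. y \<in> U \<Longrightarrow> g y = f y"
    and F: "F \<le> nhds c" "eventually (\<lambda>y. y \<in> U) F"
  shows "\<exists>C>0. Limsup F (\<lambda>y. ereal \<bar>Hq f y\<bar>) \<le> ereal C"
proof -
  obtain M where "eventually (\<lambda>y. \<bar>Hq g y\<bar> \<le> M) (nhds c)"
    using Hq_locally_bounded[OF an(1) c] real_analytic_on_not_eventually_zero[OF an c(1)] by blast
  then have "eventually (\<lambda>y. \<bar>Hq g y\<bar> \<le> M) F"
    by (rule filter_leD[OF F(1)])
  with F(2) have "eventually (\<lambda>y. ereal \<bar>Hq f y\<bar> \<le> ereal (max M 1)) F"
  proof eventually_elim
    case (elim y)
    then have "Hq g y = Hq f y"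
      by (intro Hq_cong_open[OF U(1) U(2)])
    with elim show ?case
      by (simp add: le_max_iff_disj)
  qed
  then have "Limsup F (\<lambda>y. ereal \<bar>Hq f y\<bar>) \<le> ereal (max M 1)"
    by (rule Limsup_bounded)
  then show ?thesis
    by (intro exI[of _ "max M 1"]) simp
qed

lemma bounded_on_compact_if_locally_bounded:
  fixes g :: "'a::topological_space \<Rightarrow> real"
  assumes "compact K" "\<And>x. x \<in> K \<Longrightarrow> \<exists>M. eventually (\<lambda>y. \<bar>g y\<bar> \<le> M) (nhds x)"
  shows "\<exists>M. \<forall>y\<in>K. \<bar>g y\<bar> \<le> M"
proof -
  have "\<forall>x\<in>K. \<exists>T M. open T \<and> x \<in> T \<and> (\<forall>y\<in>T. \<bar>g y\<bar> \<le> M)"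
    using assms(2) unfolding eventually_nhds by metis
  then obtain T M where TM: "\<And>x. x \<in> K \<Longrightarrow> open (T x) \<and> x \<in> T x \<and> (\<forall>y\<in>T x. \<bar>g y\<bar> \<le> M x)"
    by metis
  obtain C where C: "C \<subseteq> K" "finite C" "K \<subseteq> (\<Union>c\<in>C. T c)"
    using assms(1) by (rule compactE_image[of K K T]) (use TM in blast)+
  have "\<bar>g y\<bar> \<le> Max (insert 0 (M ` C))" if "y \<in> K" for y
  proof -
    obtain c where "c \<in> C" "y \<in> T c"
      using C(3) \<open>y \<in> K\<close> by blast
    then have "\<bar>g y\<bar> \<le> M c"
      using TM C(1) by blast
    also have "\<dots> \<le> Max (insert 0 (M ` C))"
      using \<open>c \<in> C\<close> C(2) by (intro Max_ge) auto
    finally show ?thesis .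
  qed
  then show ?thesis by blast
qed

lemma bounded_on_open_interval_if_locally_bounded:
  fixes g :: "real \<Rightarrow> real"
  assumes "\<exists>M. eventually (\<lambda>y. \<bar>g y\<bar> \<le> M) (at_right a)"
    and "\<exists>M. eventually (\<lambda>y. \<bar>g y\<bar> \<le> M) (at_left b)"
    and "\<And>x. x \<in> {a<..<b} \<Longrightarrow> \<exists>M. eventually (\<lambda>y. \<bar>g y\<bar> \<le> M) (nhds x)"
  shows "\<exists>M. \<forall>y\<in>{a<..<b}. \<bar>g y\<bar> \<le> M"
proof -
  obtain Ma c where c: "c > a" "\<And>y. a < y \<Longrightarrow> y < c \<Longrightarrow> \<bar>g y\<bar> \<le> Ma"
    using assms(1) unfolding eventually_at_right_field by blast
  obtain Mb d where d: "d < b" "\<And>y. d < y \<Longrightarrow> y < b \<Longrightarrow> \<bar>g y\<bar> \<le> Mb"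
    using assms(2) unfolding eventually_at_left_field by blast
  have "\<exists>M. eventually (\<lambda>y. \<bar>g y\<bar> \<le> M) (nhds x)" if "x \<in> {c..d}" for x
    using that c(1) d(1) by (intro assms(3)) simp
  then obtain Mcd where Mcd: "\<And>y. y \<in> {c..d} \<Longrightarrow> \<bar>g y\<bar> \<le> Mcd"
    using bounded_on_compact_if_locally_bounded[OF compact_Icc] by blast
  have "\<bar>g y\<bar> \<le> max Ma (max Mb Mcd)" if "y \<in> {a<..<b}" for y
  proof (cases "y < c")
    case True
    with that c(2)[of y] show ?thesis by simp
  next
    case False
    with that d(2)[of y] Mcd[of y] show ?thesis by (cases "d < y") simp_all
  qed
  then show ?thesis by blast
qed

lemma Hq_bounded_if_Limsup_bounded:
  assumes "0 < a" and an: "real_analytic_on f {a<..<b}" and nz: "\<exists>x\<in>{a<..<b}. f x \<noteq> 0"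
    and "Limsup (at_right a) (\<lambda>x. ereal \<bar>Hq f x\<bar>) \<le> ereal C"
    and "Limsup (at_left b) (\<lambda>x. ereal \<bar>Hq f x\<bar>) \<le> ereal C"
  shows "\<exists>L. \<forall>y\<in>{a<..<b}. \<bar>Hq f y\<bar> \<le> L"
proof (rule bounded_on_open_interval_if_locally_bounded)
  show "\<exists>M. eventually (\<lambda>y. \<bar>Hq f y\<bar> \<le> M) (at_right a)"
    "\<exists>M. eventually (\<lambda>y. \<bar>Hq f y\<bar> \<le> M) (at_left b)"
    using assms(4,5) by (auto intro: eventually_bounded_if_Limsup_le)
  fix x assume x: "x \<in> {a<..<b}"
  with \<open>0 < a\<close> have "x \<noteq> 0" by simp
  with x show "\<exists>M. eventually (\<lambda>y. \<bar>Hq f y\<bar> \<le> M) (nhds x)"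
    by (intro Hq_locally_bounded[OF an] real_analytic_on_not_eventually_zero[OF an _ _ nz]) simp_all
qed

section \<open>Zeros on a segment\<close>

lemma nonzero_on_closed_segment_if_no_first_zero:
  fixes g :: "real \<Rightarrow> real"
  assumes cont: "continuous_on (closed_segment x y) g"
    and step: "\<And>z. z \<in> closed_segment x y \<Longrightarrow>
                 (\<And>w. w \<in> closed_segment x z \<Longrightarrow> w \<noteq> z \<Longrightarrow> g w \<noteq> 0) \<Longrightarrow> g z \<noteq> 0"
    and z: "z \<in> closed_segment x y"
  shows "g z \<noteq> 0"
proof
  assume "g z = 0"
  define Z where "Z = {z \<in> closed_segment x y. g z = 0}"
  have "closed Z" "Z \<noteq> {}"
    using continuous_closed_preimage_constant[OF cont] z \<open>g z = 0\<close> by (auto simp: Z_def)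
  then obtain s where s: "s \<in> Z" and nearest: "\<And>w. w \<in> Z \<Longrightarrow> dist x s \<le> dist x w"
    using distance_attains_inf[of Z x] by blast
  have "g w \<noteq> 0" if "w \<in> closed_segment x s" "w \<noteq> s" for w
  proof
    assume "g w = 0"
    have "closed_segment x s \<subseteq> closed_segment x y"
      using s by (intro closed_segment_subset) (auto simp: Z_def)
    with that \<open>g w = 0\<close> have "w \<in> Z" by (auto simp: Z_def)
    moreover have "dist x w < dist x s"
      using that by (auto simp: closed_segment_eq_real_ivl dist_real_def split: if_splits)
    ultimately show False
      using nearest by fastforce
  qed
  with s show False
    using step[of s] by (auto simp: Z_def)
qed

lemma gronwall_nonzero:
  fixes \<phi> \<phi>' :: "real \<Rightarrow> real"
  assumes "t0 \<le> t1"
    and deriv: "\<And>t. t \<in> {t0..t1} \<Longrightarrow> (\<phi> has_real_derivative \<phi>' t) (at t)"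
    and bound: "\<And>t. t \<in> {t0..t1} \<Longrightarrow> \<bar>\<phi> t * \<phi>' t\<bar> \<le> K * (\<phi> t)\<^sup>2"
    and "\<phi> t0 \<noteq> 0"
  shows "\<phi> t1 \<noteq> 0"
proof -
  define g where "g t = (\<phi> t)\<^sup>2 * exp (2 * K * t)" for t
  have "g t0 \<le> g t1"
  proof (rule DERIV_nonneg_imp_nondecreasing[OF \<open>t0 \<le> t1\<close>])
    fix t assume "t0 \<le> t" "t \<le> t1"
    then have t: "t \<in> {t0..t1}" by simp
    have "(g has_real_derivative (2 * \<phi> t * \<phi>' t + 2 * K * (\<phi> t)\<^sup>2) * exp (2 * K * t)) (at t)"
      unfolding g_def using deriv[OF t]
      by (auto intro!: derivative_eq_intros simp: algebra_simps power2_eq_square)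
    moreover have "0 \<le> 2 * \<phi> t * \<phi>' t + 2 * K * (\<phi> t)\<^sup>2"
      using bound[OF t] by (simp add: abs_le_iff)
    ultimately show "\<exists>D. (g has_real_derivative D) (at t) \<and> 0 \<le> D"
      by auto
  qed
  moreover have "0 < g t0"
    using \<open>\<phi> t0 \<noteq> 0\<close> by (simp add: g_def)
  ultimately show ?thesis
    by (auto simp: g_def)
qed

lemma gronwall_nonzero_segment:
  fixes \<phi> \<phi>' :: "real \<Rightarrow> real"
  assumes deriv: "\<And>t. t \<in> closed_segment t0 t1 \<Longrightarrow> (\<phi> has_real_derivative \<phi>' t) (at t)"
    and bound: "\<And>t. t \<in> closed_segment t0 t1 \<Longrightarrow> \<bar>\<phi> t * \<phi>' t\<bar> \<le> K * (\<phi> t)\<^sup>2"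
    and "\<phi> t0 \<noteq> 0"
  shows "\<phi> t1 \<noteq> 0"
proof (cases "t0 \<le> t1")
  case True
  then show ?thesis
    using gronwall_nonzero[of t0 t1 \<phi> \<phi>' K] assms by (simp add: closed_segment_eq_real_ivl)
next
  case False
  have "(\<lambda>t. \<phi> (- t)) (- t1) \<noteq> 0"
  proof (rule gronwall_nonzero[of "- t0" "- t1" "\<lambda>t. \<phi> (- t)" "\<lambda>t. - \<phi>' (- t)" K])
    fix t assume "t \<in> {- t0..- t1}"
    then have t: "- t \<in> closed_segment t0 t1"
      using False by (auto simp: closed_segment_eq_real_ivl)
    show "((\<lambda>t. \<phi> (- t)) has_real_derivative - \<phi>' (- t)) (at t)"
      using DERIV_chain2[OF deriv[OF t] DERIV_minus[OF DERIV_ident]] by simp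
    show "\<bar>\<phi> (- t) * - \<phi>' (- t)\<bar> \<le> K * (\<phi> (- t))\<^sup>2"
      using bound[OF t] by simp
  qed (use False \<open>\<phi> t0 \<noteq> 0\<close> in simp_all)
  then show ?thesis by simp
qed

section \<open>The elasticity in logarithmic coordinates\<close>

definition elasticity :: "(real \<Rightarrow> real) \<Rightarrow> real \<Rightarrow> real" where
  "elasticity f x = x * deriv f x / f x"

lemma kappa_eq_abs_elasticity:
  "x \<noteq> 0 \<Longrightarrow> f x \<noteq> 0 \<Longrightarrow> kappa f x = ereal \<bar>elasticity f x\<bar>"
  by (simp add: kappa_def elasticity_def abs_mult abs_divide)

lemma mu_eq_one_plus_abs_elasticity:
  "x \<noteq> 0 \<Longrightarrow> f x \<noteq> 0 \<Longrightarrow> mu f x = ereal (1 + \<bar>elasticity f x\<bar>)"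
  by (simp add: mu_def kappa_eq_abs_elasticity)

lemma abs_cos_diff_le:
  fixes a b :: real
  shows "\<bar>cos a - cos b\<bar> \<le> \<bar>a - b\<bar>"
proof -
  have "\<bar>cos a - cos b\<bar> = 2 * \<bar>sin ((a + b) / 2)\<bar> * \<bar>sin ((b - a) / 2)\<bar>"
    by (simp add: cos_diff_cos abs_mult)
  also have "\<dots> \<le> 2 * 1 * \<bar>(b - a) / 2\<bar>"
    by (intro mult_mono abs_sin_x_le_abs_x) simp_all
  finally show ?thesis by simp
qed

lemma cos_arctan_ge: "1 / (1 + \<bar>e\<bar>) \<le> cos (arctan e)"
proof -
  have "sqrt (1 + e\<^sup>2) \<le> sqrt ((1 + \<bar>e\<bar>)\<^sup>2)"
    by (intro real_sqrt_le_mono) (simp add: power2_eq_square algebra_simps)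
  then have "sqrt (1 + e\<^sup>2) \<le> 1 + \<bar>e\<bar>" by simp
  then show ?thesis
    unfolding cos_arctan by (rule divide_left_mono) (simp_all add: add_pos_nonneg)
qed

lemma one_plus_abs_le_if_cos_arctan_ge:
  assumes "0 < c" "c \<le> cos (arctan e)"
  shows "1 + \<bar>e\<bar> \<le> 2 / c"
proof -
  have "0 < sqrt (1 + e\<^sup>2)"
    by (simp add: add_pos_nonneg)
  then have "c * sqrt (1 + e\<^sup>2) \<le> 1"
    using assms(2) by (simp add: cos_arctan le_divide_eq)
  then have "sqrt (1 + e\<^sup>2) \<le> 1 / c"
    using assms(1) by (simp add: le_divide_eq mult.commute)
  moreover have "\<bar>e\<bar> \<le> sqrt (1 + e\<^sup>2)" "1 \<le> sqrt (1 + e\<^sup>2)"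
    by (simp_all add: real_le_rsqrt)
  moreover have "2 / c = 1 / c + 1 / c"
    by simp
  ultimately show ?thesis
    by linarith
qed

lemma abs_diff_square_div_le:
  fixes e :: real
  shows "\<bar>(e - e\<^sup>2) / (1 + e\<^sup>2)\<bar> \<le> 3 / 2"
proof -
  have "0 \<le> (\<bar>e\<bar> - 1)\<^sup>2" by simp
  then have "2 * \<bar>e\<bar> \<le> 1 + e\<^sup>2"
    by (simp add: power2_eq_square algebra_simps)
  moreover have "\<bar>e - e\<^sup>2\<bar> \<le> \<bar>e\<bar> + e\<^sup>2"
    using abs_triangle_ineq4[of e "e\<^sup>2"] by simp
  ultimately have "\<bar>e - e\<^sup>2\<bar> \<le> 3 / 2 * (1 + e\<^sup>2)"
    by (simp add: algebra_simps)
  then show ?thesis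
    by (simp add: abs_divide add_pos_nonneg divide_le_eq)
qed

lemma has_real_derivative_arctan_elasticity_exp:
  assumes d1: "(f has_real_derivative deriv f (exp t)) (at (exp t))"
    and d2: "(deriv f has_real_derivative deriv (deriv f) (exp t)) (at (exp t))"
    and nz: "f (exp t) \<noteq> 0"
  defines "e \<equiv> elasticity f (exp t)"
  shows "((\<lambda>s. arctan (elasticity f (exp s))) has_real_derivative
            Hq f (exp t) + (e - e\<^sup>2) / (1 + e\<^sup>2)) (at t)"
proof -
  define y u v w where "y = exp t" and "u = f y" and "v = deriv f y" and "w = deriv (deriv f) y"
  have c1: "((\<lambda>s. f (exp s)) has_real_derivative v * y) (at t)"
    using DERIV_chain2[OF d1 DERIV_exp] by (simp add: y_def v_def)
  have c2: "((\<lambda>s. deriv f (exp s)) has_real_derivative w * y) (at t)"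
    using DERIV_chain2[OF d2 DERIV_exp] by (simp add: y_def w_def)
  have "((\<lambda>s. exp s * deriv f (exp s) / f (exp s)) has_real_derivative
          ((y * v + w * y * y) * u - y * v * (v * y)) / (u * u)) (at t)"
    using DERIV_divide[OF DERIV_mult[OF DERIV_exp c2] c1] nz by (simp add: y_def u_def v_def)
  from DERIV_chain2[OF DERIV_arctan this]
  have "((\<lambda>s. arctan (elasticity f (exp s))) has_real_derivative
          inverse (1 + e\<^sup>2) * (((y * v + w * y * y) * u - y * v * (v * y)) / (u * u))) (at t)"
    by (simp add: elasticity_def e_def y_def u_def v_def)
  moreover have "inverse (1 + e\<^sup>2) * (((y * v + w * y * y) * u - y * v * (v * y)) / (u * u))
                 = Hq f (exp t) + (e - e\<^sup>2) / (1 + e\<^sup>2)"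
  proof -
    have "u \<noteq> 0" "1 + e\<^sup>2 \<noteq> 0"
      using nz by (simp_all add: u_def y_def add_nonneg_eq_0_iff)
    have e: "e = y * v / u"
      by (simp add: e_def elasticity_def y_def u_def v_def)
    have q: "((y * v + w * y * y) * u - y * v * (v * y)) / (u * u) = e + y\<^sup>2 * w / u - e\<^sup>2"
      unfolding e using \<open>u \<noteq> 0\<close> by (simp add: field_simps power2_eq_square)
    have H: "Hq f (exp t) = (y\<^sup>2 * w / u) / (1 + e\<^sup>2)"
    proof -
      have "u\<^sup>2 + y\<^sup>2 * v\<^sup>2 = u\<^sup>2 * (1 + e\<^sup>2)"
        unfolding e using \<open>u \<noteq> 0\<close> by (simp add: field_simps power2_eq_square)
      then show ?thesis
        using \<open>u \<noteq> 0\<close> by (simp add: Hq_def y_def[symmetric] u_def[symmetric] v_def[symmetric]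
            w_def[symmetric] power2_eq_square)
    qed
    show ?thesis
      unfolding q H by (simp add: divide_inverse algebra_simps flip: distrib_right)
  qed
  ultimately show ?thesis by simp
qed

lemma abs_mult_deriv_le_if_elasticity_le:
  assumes "0 < m" "m \<le> w" "\<bar>elasticity f w\<bar> \<le> E"
  shows "\<bar>f w * deriv f w\<bar> \<le> E / m * (f w)\<^sup>2"
proof (cases "f w = 0")
  case False
  have "\<bar>elasticity f w\<bar> / w \<le> E / m"
    using assms by (intro frac_le) auto
  then have "(f w)\<^sup>2 * (\<bar>elasticity f w\<bar> / w) \<le> (f w)\<^sup>2 * (E / m)"
    by (rule mult_left_mono) simp
  moreover have "\<bar>f w * deriv f w\<bar> = (f w)\<^sup>2 * (\<bar>elasticity f w\<bar> / w)"
    using False assms(1,2) by (simp add: elasticity_def abs_mult abs_divide power2_eq_square field_simps)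
  ultimately show ?thesis
    by (simp only: mult.commute)
qed simp

context
  fixes f :: "real \<Rightarrow> real" and J :: "real set" and L :: real
  assumes J_pos: "J \<subseteq> {0<..}" and J_convex: "convex J"
    and twice_diff: "\<And>y. y \<in> J \<Longrightarrow> (f has_real_derivative deriv f y) (at y) \<and>
                                 (deriv f has_real_derivative deriv (deriv f) y) (at y)"
    and Hq_bound: "\<And>y. y \<in> J \<Longrightarrow> \<bar>Hq f y\<bar> \<le> L"
begin

lemma arctan_elasticity_lipschitz:
  assumes seg: "closed_segment x z \<subseteq> J" and nz: "\<And>w. w \<in> closed_segment x z \<Longrightarrow> f w \<noteq> 0"
  shows "\<bar>arctan (elasticity f z) - arctan (elasticity f x)\<bar> \<le> (L + 3 / 2) * \<bar>ln z - ln x\<bar>"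
proof -
  have "x > 0" "z > 0"
    using seg J_pos by auto
  have exp_in: "exp t \<in> closed_segment x z" if "t \<in> closed_segment (ln x) (ln z)" for t
  proof -
    have "exp t \<in> closed_segment (exp (ln x)) (exp (ln z))"
      using that by (auto simp: closed_segment_eq_real_ivl split: if_splits)
    then show ?thesis
      using \<open>x > 0\<close> \<open>z > 0\<close> by simp
  qed
  have "norm (arctan (elasticity f (exp (ln z))) - arctan (elasticity f (exp (ln x))))
          \<le> (L + 3 / 2) * norm (ln z - ln x)"
  proof (rule field_differentiable_bound[OF convex_closed_segment])
    fix t assume t: "t \<in> closed_segment (ln x) (ln z)"
    have y: "exp t \<in> J" "f (exp t) \<noteq> 0"
      using exp_in[OF t] seg nz by auto
    define e where "e = elasticity f (exp t)"
    show "((\<lambda>s. arctan (elasticity f (exp s))) has_field_derivative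
             Hq f (exp t) + (e - e\<^sup>2) / (1 + e\<^sup>2)) (at t within closed_segment (ln x) (ln z))"
      unfolding e_def
      by (rule has_field_derivative_at_within, rule has_real_derivative_arctan_elasticity_exp)
        (use twice_diff[OF y(1)] y(2) in auto)
    show "norm (Hq f (exp t) + (e - e\<^sup>2) / (1 + e\<^sup>2)) \<le> L + 3 / 2"
      using Hq_bound[OF y(1)] abs_diff_square_div_le[of e]
        abs_triangle_ineq[of "Hq f (exp t)" "(e - e\<^sup>2) / (1 + e\<^sup>2)"]
      unfolding real_norm_def by linarith
  qed simp_all
  then show ?thesis
    using \<open>x > 0\<close> \<open>z > 0\<close> by simp
qed

lemma elasticity_bound_before_first_zero:
  assumes x: "x \<in> J" and y: "y \<in> J"
    and close: "(2 * L + 3) * \<bar>ln y - ln x\<bar> \<le> 1 / (1 + \<bar>elasticity f x\<bar>)"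
    and z: "z \<in> closed_segment x y"
    and before: "\<And>w. w \<in> closed_segment x z \<Longrightarrow> w \<noteq> z \<Longrightarrow> f w \<noteq> 0"
  shows "1 + \<bar>elasticity f z\<bar> \<le> 4 * (1 + \<bar>elasticity f x\<bar>)"
proof (cases "f z = 0")
  case False
  with before have nz: "\<And>w. w \<in> closed_segment x z \<Longrightarrow> f w \<noteq> 0"
    by metis
  define \<mu> where "\<mu> = 1 + \<bar>elasticity f x\<bar>"
  have "\<mu> \<ge> 1" "L \<ge> 0" "x > 0" "y > 0"
    using Hq_bound[OF x] x y J_pos by (auto simp: \<mu>_def)
  have "closed_segment x z \<subseteq> closed_segment x y"
    by (rule closed_segment_subset[OF ends_in_segment(1) z convex_closed_segment])
  also have "closed_segment x y \<subseteq> J"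
    by (rule closed_segment_subset[OF x y J_convex])
  finally have "\<bar>arctan (elasticity f z) - arctan (elasticity f x)\<bar> \<le> (L + 3 / 2) * \<bar>ln z - ln x\<bar>"
    using nz by (rule arctan_elasticity_lipschitz)
  also have "\<dots> \<le> (L + 3 / 2) * \<bar>ln y - ln x\<bar>"
    using z \<open>x > 0\<close> \<open>y > 0\<close> \<open>L \<ge> 0\<close>
    by (intro mult_left_mono) (auto simp: closed_segment_eq_real_ivl split: if_splits)
  also have "\<dots> \<le> 1 / (2 * \<mu>)"
    using close by (simp add: \<mu>_def field_simps)
  finally have "\<bar>cos (arctan (elasticity f z)) - cos (arctan (elasticity f x))\<bar> \<le> 1 / (2 * \<mu>)"
    using abs_cos_diff_le order_trans by blast
  moreover have "1 / \<mu> \<le> cos (arctan (elasticity f x))"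
    unfolding \<mu>_def by (rule cos_arctan_ge)
  ultimately have "1 / (2 * \<mu>) \<le> cos (arctan (elasticity f z))"
    by (simp add: field_simps abs_le_iff)
  then show ?thesis
    using one_plus_abs_le_if_cos_arctan_ge[of "1 / (2 * \<mu>)"] \<open>\<mu> \<ge> 1\<close> by (simp add: \<mu>_def)
qed (simp add: elasticity_def)

lemma elasticity_stable:
  assumes x: "x \<in> J" "f x \<noteq> 0" and y: "y \<in> J"
    and close: "(2 * L + 3) * \<bar>ln y - ln x\<bar> \<le> 1 / (1 + \<bar>elasticity f x\<bar>)"
  shows "f y \<noteq> 0" "1 + \<bar>elasticity f y\<bar> \<le> 4 * (1 + \<bar>elasticity f x\<bar>)"
proof -
  define \<mu> where "\<mu> = 1 + \<bar>elasticity f x\<bar>"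
  have seg: "closed_segment x y \<subseteq> J"
    by (rule closed_segment_subset[OF x(1) y J_convex])
  have "x > 0" "y > 0"
    using x(1) y J_pos by auto
  have nz: "f z \<noteq> 0" if "z \<in> closed_segment x y" for z
  proof (rule nonzero_on_closed_segment_if_no_first_zero[OF _ _ that])
    show "continuous_on (closed_segment x y) f"
      using seg twice_diff by (intro continuous_at_imp_continuous_on) (blast intro: DERIV_isCont)
  next
    fix z assume z: "z \<in> closed_segment x y"
      and before: "\<And>w. w \<in> closed_segment x z \<Longrightarrow> w \<noteq> z \<Longrightarrow> f w \<noteq> 0"
    show "f z \<noteq> 0"
    proof (rule gronwall_nonzero_segment[of x z f "deriv f" "4 * \<mu> / min x y"])
      fix w assume w: "w \<in> closed_segment x z"
      then have "w \<in> closed_segment x y" "min x y \<le> w"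
        using closed_segment_subset[OF ends_in_segment(1) z convex_closed_segment]
        by (auto simp: closed_segment_eq_real_ivl split: if_splits)
      then show "(f has_real_derivative deriv f w) (at w)"
        using seg twice_diff by blast
      have "f v \<noteq> 0" if "v \<in> closed_segment x w" "v \<noteq> w" for v
        using that w before[of v] by (auto simp: closed_segment_eq_real_ivl split: if_splits)
      then have "\<bar>elasticity f w\<bar> \<le> 4 * \<mu>"
        using elasticity_bound_before_first_zero[OF x(1) y close \<open>w \<in> closed_segment x y\<close>]
        by (simp add: \<mu>_def)
      then show "\<bar>f w * deriv f w\<bar> \<le> 4 * \<mu> / min x y * (f w)\<^sup>2"
        using \<open>min x y \<le> w\<close> \<open>x > 0\<close> \<open>y > 0\<close> by (intro abs_mult_deriv_le_if_elasticity_le) auto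
    qed (use x(2) in simp)
  qed
  show "f y \<noteq> 0"
    using nz by simp
  show "1 + \<bar>elasticity f y\<bar> \<le> 4 * (1 + \<bar>elasticity f x\<bar>)"
    using elasticity_bound_before_first_zero[OF x(1) y close] nz by simp
qed

end

section \<open>Amenability\<close>

lemma rdist_lessD:
  assumes "x > 0" "rdist y x < ereal r"
  shows "y > 0" "\<bar>ln y - ln x\<bar> < r"
proof -
  show "y > 0"
    using assms by (cases "y > 0") (auto simp: rdist_def zero_less_mult_iff)
  with assms show "\<bar>ln y - ln x\<bar> < r"
    by (simp add: rdist_def ln_div abs_minus_commute)
qed

lemma in_interval_if_kappa_bounded_on_log_ball:
  fixes f :: "real \<Rightarrow> real"
  assumes x: "x \<in> {a<..<b}" "0 < a"
    and kappa_a: "(kappa f \<longlongrightarrow> \<infinity>) (at_right a)" and kappa_b: "(kappa f \<longlongrightarrow> \<infinity>) (at_left b)"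
    and bounded: "\<And>s. s \<in> {a<..<b} \<Longrightarrow> \<bar>ln s - ln x\<bar> < \<rho> \<Longrightarrow> kappa f s \<le> ereal K"
    and y: "y > 0" "\<bar>ln y - ln x\<bar> < \<rho>"
  shows "y \<in> {a<..<b}"
proof (rule ccontr)
  assume "y \<notin> {a<..<b}"
  then consider "y \<le> a" | "b \<le> y" by force
  then show False
  proof cases
    case 1
    have "eventually (\<lambda>s. ereal K < kappa f s \<and> s < x) (at_right a)"
      using order_tendstoD(1)[OF kappa_a, of "ereal K"] x(1)
      by (auto simp: eventually_conj_iff eventually_at_right_field intro: exI[of _ x])
    then obtain s where s: "a < s" "s < x" "ereal K < kappa f s"
      unfolding eventually_at_right_field by (metis dense)
    have "ln y < ln s" "ln s < ln x"
      using y(1) 1 s by simp_all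
    with y(2) s x bounded[of s] show False by auto
  next
    case 2
    have "eventually (\<lambda>s. ereal K < kappa f s \<and> x < s) (at_left b)"
      using order_tendstoD(1)[OF kappa_b, of "ereal K"] x(1)
      by (auto simp: eventually_conj_iff eventually_at_left_field intro: exI[of _ x])
    then obtain s where s: "s < b" "x < s" "ereal K < kappa f s"
      unfolding eventually_at_left_field by (metis dense)
    have "ln x < ln s" "ln s < ln y"
      using x 2 s by simp_all
    with y(2) s x bounded[of s] show False by auto
  qed
qed

lemma amenable_if_Hq_bounded:
  fixes f :: "real \<Rightarrow> real"
  assumes ab: "0 < a" "a < b"
    and twice_diff: "\<And>y. y \<in> {a<..<b} \<Longrightarrow> (f has_real_derivative deriv f y) (at y) \<and>
                                 (deriv f has_real_derivative deriv (deriv f) y) (at y)"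
    and Hq_bound: "\<And>y. y \<in> {a<..<b} \<Longrightarrow> \<bar>Hq f y\<bar> \<le> L"
    and kappa_a: "(kappa f \<longlongrightarrow> \<infinity>) (at_right a)" and kappa_b: "(kappa f \<longlongrightarrow> \<infinity>) (at_left b)"
  shows "amenable f {a<..<b}"
  unfolding amenable_def Let_def
proof (intro exI[of _ "2 * L + 4"] conjI ballI impI subsetI)
  have "L \<ge> 0"
    using Hq_bound[of "(a + b) / 2"] ab by force
  then show C: "0 < 2 * L + 4" by simp
  fix x assume x: "x \<in> {a<..<b}" "kappa f x < \<infinity>"
  then have "x > 0" "f x \<noteq> 0"
    using ab by (auto simp: kappa_def split: if_splits)
  define \<mu> where "\<mu> = 1 + \<bar>elasticity f x\<bar>"
  define \<rho> where "\<rho> = 1 / ((2 * L + 4) * \<mu>)"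
  have mu_x: "mu f x = ereal \<mu>"
    using \<open>x > 0\<close> \<open>f x \<noteq> 0\<close> by (simp add: \<mu>_def mu_eq_one_plus_abs_elasticity)
  have "\<mu> \<ge> 1" by (simp add: \<mu>_def)
  have stable: "f s \<noteq> 0 \<and> 1 + \<bar>elasticity f s\<bar> \<le> 4 * \<mu>"
    if "s \<in> {a<..<b}" "\<bar>ln s - ln x\<bar> < \<rho>" for s
  proof -
    have "(2 * L + 3) * \<bar>ln s - ln x\<bar> \<le> (2 * L + 4) * \<rho>"
      using that(2) \<open>L \<ge> 0\<close> by (intro mult_mono) auto
    also have "\<dots> = 1 / (1 + \<bar>elasticity f x\<bar>)"
      using C \<open>\<mu> \<ge> 1\<close> by (simp add: \<rho>_def \<mu>_def)
    finally have "(2 * L + 3) * \<bar>ln s - ln x\<bar> \<le> 1 / (1 + \<bar>elasticity f x\<bar>)" .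
    moreover have "{a<..<b} \<subseteq> {0<..}"
      using ab by auto
    ultimately show ?thesis
      using elasticity_stable[where J = "{a<..<b}" and f = f and L = L and x = x and y = s]
        twice_diff Hq_bound x(1) \<open>f x \<noteq> 0\<close> that(1) unfolding \<mu>_def by blast
  qed
  fix y assume "y \<in> {y. rdist y x < ereal (1 / ((2 * L + 4) * real_of_ereal (mu f x)))}"
  then have y: "y > 0" "\<bar>ln y - ln x\<bar> < \<rho>"
    using rdist_lessD[OF \<open>x > 0\<close>] by (simp_all add: mu_x \<rho>_def)
  have "kappa f s \<le> ereal (4 * \<mu>)" if "s \<in> {a<..<b}" "\<bar>ln s - ln x\<bar> < \<rho>" for s
    using stable[OF that] that(1) ab by (simp add: kappa_eq_abs_elasticity)
  then show y_in: "y \<in> {a<..<b}"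
    by (rule in_interval_if_kappa_bounded_on_log_ball[OF x(1) ab(1) kappa_a kappa_b _ y])
  have "mu f y \<le> ereal (4 * \<mu>)"
    using stable[OF y_in y(2)] y(1) by (simp add: mu_eq_one_plus_abs_elasticity)
  also have "4 * \<mu> \<le> (2 * L + 4) * \<mu>"
    using \<open>L \<ge> 0\<close> \<open>\<mu> \<ge> 1\<close> by (intro mult_right_mono) auto
  finally show "mu f y \<le> ereal (2 * L + 4) * mu f x"
    by (simp add: mu_x)
qed

theorem proposition1:
  fixes f :: "real \<Rightarrow> real" and a b :: real
  assumes ab: "0 < a" "a < b"
    and an: "real_analytic_on f {a<..<b}"
    and nz: "\<exists>x\<in>{a<..<b}. f x \<noteq> 0"
  shows
    "((kappa f \<longlongrightarrow> \<infinity>) (at_right a) \<and> (kappa f \<longlongrightarrow> \<infinity>) (at_left b) \<and>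
      (\<exists>C>0. Limsup (at_right a) (\<lambda>x. ereal \<bar>Hq f x\<bar>) \<le> ereal C \<and>
              Limsup (at_left b) (\<lambda>x. ereal \<bar>Hq f x\<bar>) \<le> ereal C)
      \<longrightarrow> amenable f {a<..<b})
     \<and> ((\<exists>\<epsilon>>0. \<exists>g. real_analytic_on g {a - \<epsilon><..<b} \<and> (\<forall>x\<in>{a<..<b}. g x = f x))
         \<longrightarrow> (\<exists>C>0. Limsup (at_right a) (\<lambda>x. ereal \<bar>Hq f x\<bar>) \<le> ereal C))
     \<and> ((\<exists>\<epsilon>>0. \<exists>g. real_analytic_on g {a<..<b + \<epsilon>} \<and> (\<forall>x\<in>{a<..<b}. g x = f x))
         \<longrightarrow> (\<exists>C>0. Limsup (at_left b) (\<lambda>x. ereal \<bar>Hq f x\<bar>) \<le> ereal C))"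
proof (intro conjI impI)
  assume H: "(kappa f \<longlongrightarrow> \<infinity>) (at_right a) \<and> (kappa f \<longlongrightarrow> \<infinity>) (at_left b) \<and>
      (\<exists>C>0. Limsup (at_right a) (\<lambda>x. ereal \<bar>Hq f x\<bar>) \<le> ereal C \<and>
              Limsup (at_left b) (\<lambda>x. ereal \<bar>Hq f x\<bar>) \<le> ereal C)"
  then obtain L where L: "\<And>y. y \<in> {a<..<b} \<Longrightarrow> \<bar>Hq f y\<bar> \<le> L"
    using Hq_bounded_if_Limsup_bounded[OF ab(1) an nz] by blast
  show "amenable f {a<..<b}"
    using H real_analytic_on_twice_differentiable[OF an] by (intro amenable_if_Hq_bounded[OF ab _ L]) auto
next
  assume "\<exists>\<epsilon>>0. \<exists>g. real_analytic_on g {a - \<epsilon><..<b} \<and> (\<forall>x\<in>{a<..<b}. g x = f x)"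
  then obtain \<epsilon> g where "\<epsilon> > 0" "real_analytic_on g {a - \<epsilon><..<b}" "\<forall>x\<in>{a<..<b}. g x = f x"
    by blast
  with ab nz show "\<exists>C>0. Limsup (at_right a) (\<lambda>x. ereal \<bar>Hq f x\<bar>) \<le> ereal C"
    by (intro Limsup_Hq_bounded_if_analytic_extension[where c = a and U = "{a<..<b}"])
      (force simp: at_within_le_nhds eventually_at_right_field)+
next
  assume "\<exists>\<epsilon>>0. \<exists>g. real_analytic_on g {a<..<b + \<epsilon>} \<and> (\<forall>x\<in>{a<..<b}. g x = f x)"
  then obtain \<epsilon> g where "\<epsilon> > 0" "real_analytic_on g {a<..<b + \<epsilon>}" "\<forall>x\<in>{a<..<b}. g x = f x"
    by blast
  with ab nz show "\<exists>C>0. Limsup (at_left b) (\<lambda>x. ereal \<bar>Hq f x\<bar>) \<le> ereal C"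
    by (intro Limsup_Hq_bounded_if_analytic_extension[where c = b and U = "{a<..<b}"])
      (force simp: at_within_le_nhds eventually_at_left_field)+
qed

end
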